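(* For every integer $3 \leqslant \ell \leqslant n$ and $p \in (0,1)$ with $p\ell^2 \leqslant 1$, $$\left(\frac{1}{2\mathrm{e}^2}\right)^{\ell}(\ell p)^{2\ell-3} \,\leqslant\, P(\ell,p) \,\leqslant\, 4^3\left(\frac{\mathrm{e}}{4}\right)^{2\ell}(\ell p)^{2\ell-3}.$$
   Context: $\mathrm{e}$ is Euler's number. For a graph $G$ on $[n]$ and a clique $K \subset K_n$, $K$ is internally spanned by $G$ if $\langle G \cap K\rangle_{K_4} = K$, where $\langle \cdot \rangle_{K_4}$ is the closure under the $K_4$-bootstrap process (repeatedly add any edge which is the only missing edge of a copy of $K_4$) and $G \cap K$ is the set of edges of $G$ with both endpoints in $V(K)$. $P(\ell,p)$ is the probability that a fixed copy of $K_\ell$ in $K_n$ is internally spanned by the Erdős–Rényi random graph $G_{n,p}$. *)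

theory Defs
  imports Complex_Main
begin

definition Kn_edges :: "nat \<Rightarrow> nat set set" where
  "Kn_edges n = {e. e \<subseteq> {1..n} \<and> card e = 2}"

definition clique_edges :: "nat set \<Rightarrow> nat set set" where
  "clique_edges S = {e. e \<subseteq> S \<and> card e = 2}"

inductive_set k4_closure :: "nat set set \<Rightarrow> nat set set" for H :: "nat set set" where
  base: "e \<in> H \<Longrightarrow> e \<in> k4_closure H"
| step: "\<lbrakk> distinct [u, v, w, x];
           {u, w} \<in> k4_closure H; {u, x} \<in> k4_closure H;
           {v, w} \<in> k4_closure H; {v, x} \<in> k4_closure H;
           {w, x} \<in> k4_closure H \<rbrakk> \<Longrightarrow> {u, v} \<in> k4_closure H"

definition internally_spanned :: "nat set set \<Rightarrow> nat set \<Rightarrow> bool" where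
  "internally_spanned G S \<longleftrightarrow> k4_closure {e \<in> G. e \<subseteq> S} = clique_edges S"

definition P_span :: "nat \<Rightarrow> nat set \<Rightarrow> real \<Rightarrow> real" where
  "P_span n S p = (\<Sum>G \<in> Pow (Kn_edges n).
      (if internally_spanned G S then p ^ card G * (1 - p) ^ (card (Kn_edges n) - card G) else 0))"

end

theory Submission
  imports Defs "HOL-Library.FuncSet"
begin

text \<open>Only the edges inside \<open>S\<close> matter, so \<open>P(l,p)\<close> is the probability that a \<open>p\<close>-random
  subgraph \<open>H\<close> of the clique on \<open>S\<close> spans it.

  Upper bound: a spanning \<open>H\<close> has at least \<open>2l - 3\<close> edges. Start from the family of the edges of
  \<open>H\<close>, of cost \<open>\<Sum>(2|C| - 3) = |H|\<close>, and repeatedly merge two members sharing two vertices, or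
  three members covering a triangle. This never increases the cost, and the final family is
  closed under the \<open>K\<^sub>4\<close>-process, so one member contains \<open>S\<close>. A union bound over the sets of
  \<open>2l - 3\<close> edges then gives \<open>P(l,p) \<le> ((l choose 2) choose (2l - 3)) p\<^bsup>2l-3\<^esup>\<close>.

  Lower bound: for an ordering \<open>s\<^sub>1, \<dots>, s\<^sub>l\<close> of \<open>S\<close>, joining \<open>s\<^sub>1 s\<^sub>2\<close> and each \<open>s\<^sub>k\<close> to two
  earlier vertices gives \<open>\<Prod>\<^sub>k ((k-1) choose 2)\<close> distinct spanning graphs with at most \<open>2l - 3\<close>
  edges, each occurring with probability at least \<open>p\<^bsup>2l-3\<^esup> (1-p)\<^bsup>l choose 2\<^esup> \<ge> p\<^bsup>2l-3\<^esup>/2\<close>.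

  Both counts are brought to the stated form with \<open>n\<^sup>n \<le> e\<^sup>n n!\<close>.\<close>

section \<open>Random subsets\<close>

definition subset_weight :: "real \<Rightarrow> 'a set \<Rightarrow> 'a set \<Rightarrow> real" where
  "subset_weight p A H = p ^ card H * (1 - p) ^ (card A - card H)"

lemma subset_weight_nonneg: "0 \<le> p \<Longrightarrow> p \<le> 1 \<Longrightarrow> 0 \<le> subset_weight p A H"
  unfolding subset_weight_def by simp

lemma sum_subset_weight_Pow:
  assumes "finite A"
  shows "(\<Sum>H\<in>Pow A. subset_weight p A H) = 1"
  using assms
proof (induction A rule: finite_induct)
  case empty
  then show ?case by (simp add: subset_weight_def)
next
  case (insert a A)
  have without_a: "subset_weight p (insert a A) H = (1 - p) * subset_weight p A H" if "H \<subseteq> A" for H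
  proof -
    have "card H \<le> card A" using that insert.hyps(1) by (simp add: card_mono)
    then show ?thesis using insert.hyps by (simp add: subset_weight_def Suc_diff_le)
  qed
  have with_a: "subset_weight p (insert a A) (insert a H) = p * subset_weight p A H"
    if "H \<subseteq> A" for H
  proof -
    have "finite H" "a \<notin> H" "card H \<le> card A"
      using that insert.hyps finite_subset card_mono by auto
    then show ?thesis using insert.hyps by (simp add: subset_weight_def)
  qed
  have inj: "inj_on (insert a) (Pow A)"
    using insert.hyps(2) unfolding inj_on_def by (metis Diff_insert_absorb PowD subsetD)
  have "(\<Sum>H\<in>Pow (insert a A). subset_weight p (insert a A) H)
      = (\<Sum>H\<in>Pow A. subset_weight p (insert a A) H)
        + (\<Sum>H\<in>Pow A. subset_weight p (insert a A) (insert a H))"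
    unfolding Pow_insert using insert.hyps inj
    by (subst sum.union_disjoint) (auto simp: sum.reindex)
  also have "\<dots> = (1 - p) * (\<Sum>H\<in>Pow A. subset_weight p A H) + p * (\<Sum>H\<in>Pow A. subset_weight p A H)"
    by (simp add: without_a with_a sum_distrib_left)
  finally show ?case using insert.IH by simp
qed

lemma sum_subset_weight_restrict:
  assumes "finite E" "K \<subseteq> E" "H \<subseteq> K"
  shows "(\<Sum>G\<in>{G\<in>Pow E. G \<inter> K = H}. subset_weight p E G) = subset_weight p K H"
proof -
  have fin: "finite K" "finite (E - K)" "finite H"
    using assms by (meson finite_Diff rev_finite_subset subset_trans)+
  have restrict_eq: "{G\<in>Pow E. G \<inter> K = H} = (\<lambda>R. H \<union> R) ` Pow (E - K)"
  proof (intro equalityI subsetI)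
    fix G assume "G \<in> {G\<in>Pow E. G \<inter> K = H}"
    then have "G = H \<union> (G - K)" "G - K \<in> Pow (E - K)" by auto
    then show "G \<in> (\<lambda>R. H \<union> R) ` Pow (E - K)" by blast
  qed (use assms in auto)
  have inj: "inj_on (\<lambda>R. H \<union> R) (Pow (E - K))"
    unfolding inj_on_def using assms by blast
  have split: "subset_weight p E (H \<union> R) = subset_weight p K H * subset_weight p (E - K) R"
    if R: "R \<subseteq> E - K" for R
  proof -
    have "finite R" using R fin finite_subset by auto
    then have card_HR: "card (H \<union> R) = card H + card R"
      using R assms fin by (subst card_Un_disjoint) auto
    have "card E = card K + card (E - K)"
      using assms fin by (simp add: card_Diff_subset card_mono)
    moreover have "card H \<le> card K" "card R \<le> card (E - K)"
      using assms fin R by (simp_all add: card_mono)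
    ultimately
    have "card E - card (H \<union> R) = (card K - card H) + (card (E - K) - card R)"
      using card_HR by simp
    then show ?thesis unfolding subset_weight_def using card_HR by (simp add: power_add)
  qed
  have "(\<Sum>G\<in>{G\<in>Pow E. G \<inter> K = H}. subset_weight p E G)
      = (\<Sum>R\<in>Pow (E - K). subset_weight p K H * subset_weight p (E - K) R)"
    unfolding restrict_eq by (simp add: sum.reindex[OF inj] split)
  also have "\<dots> = subset_weight p K H"
    using sum_subset_weight_Pow[OF fin(2)] by (simp add: sum_distrib_left[symmetric])
  finally show ?thesis .
qed

lemma sum_subset_weight_superset:
  assumes "finite A" "T \<subseteq> A"
  shows "(\<Sum>H\<in>{H\<in>Pow A. T \<subseteq> H}. subset_weight p A H) = p ^ card T"
proof -
  have "{H\<in>Pow A. T \<subseteq> H} = {H\<in>Pow A. H \<inter> T = T}" by auto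
  then show ?thesis
    using sum_subset_weight_restrict[OF assms order_refl] by (simp add: subset_weight_def)
qed

lemma sum_subset_weight_card_ge:
  assumes "finite A" "0 \<le> p" "p \<le> 1"
  shows "(\<Sum>H\<in>{H\<in>Pow A. m \<le> card H}. subset_weight p A H) \<le> real (card A choose m) * p ^ m"
proof -
  let ?subsets = "\<lambda>H. {T\<in>Pow A. T \<subseteq> H \<and> card T = m}"
  have covered:
    "(if m \<le> card H then subset_weight p A H else 0) \<le> (\<Sum>T\<in>?subsets H. subset_weight p A H)"
    if "H \<subseteq> A" for H
  proof (cases "m \<le> card H")
    case True
    then obtain T where "T \<subseteq> H" "card T = m" by (meson obtain_subset_with_card_n)
    then have "?subsets H \<noteq> {}" "finite (?subsets H)" using that assms(1) by auto
    then have "1 \<le> real (card (?subsets H))" by (simp add: Suc_leI card_gt_0_iff)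
    then show ?thesis
      using True assms subset_weight_nonneg[of p A H] by (simp add: mult_le_cancel_right1)
  qed (use assms in \<open>simp add: subset_weight_nonneg sum_nonneg\<close>)
  have "(\<Sum>H\<in>{H\<in>Pow A. m \<le> card H}. subset_weight p A H)
      = (\<Sum>H\<in>Pow A. if m \<le> card H then subset_weight p A H else 0)"
    using assms(1) by (intro sum.inter_filter) simp
  also have "\<dots> \<le> (\<Sum>H\<in>Pow A. \<Sum>T\<in>?subsets H. subset_weight p A H)"
    by (intro sum_mono covered) simp
  also have "\<dots> = (\<Sum>T\<in>Pow A. \<Sum>H\<in>{H\<in>Pow A. T \<subseteq> H \<and> card T = m}. subset_weight p A H)"
    by (rule sum.swap_restrict) (use assms(1) in simp_all)
  also have "\<dots> = (\<Sum>T\<in>Pow A. if card T = m then p ^ m else 0)"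
  proof (rule sum.cong[OF refl])
    fix T assume "T \<in> Pow A"
    then show "(\<Sum>H\<in>{H\<in>Pow A. T \<subseteq> H \<and> card T = m}. subset_weight p A H)
        = (if card T = m then p ^ m else 0)"
      using sum_subset_weight_superset[OF assms(1), of T p] by auto
  qed
  also have "\<dots> = real (card A choose m) * p ^ m"
    using assms(1) n_subsets[OF assms(1)] by (simp add: sum.inter_filter[symmetric] Pow_def)
  finally show ?thesis .
qed

definition span_prob :: "real \<Rightarrow> nat set \<Rightarrow> real" where
  "span_prob p S = (\<Sum>H\<in>{H\<in>Pow (clique_edges S). k4_closure H = clique_edges S}.
      subset_weight p (clique_edges S) H)"

lemma finite_clique_edges: "finite S \<Longrightarrow> finite (clique_edges S)"
  unfolding clique_edges_def by (rule finite_subset[of _ "Pow S"]) auto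

lemma card_clique_edges: "finite S \<Longrightarrow> card (clique_edges S) = card S choose 2"
  unfolding clique_edges_def by (simp add: n_subsets)

lemma P_span_eq_span_prob:
  assumes "S \<subseteq> {1..n}"
  shows "P_span n S p = span_prob p S"
proof -
  let ?E = "Kn_edges n" and ?K = "clique_edges S"
  let ?spans = "\<lambda>G. k4_closure (G \<inter> ?K) = ?K"
  have K_sub: "?K \<subseteq> ?E" using assms unfolding Kn_edges_def clique_edges_def by auto
  have fin: "finite ?E" "finite ?K"
    using K_sub
      by (auto simp: Kn_edges_def intro: finite_subset[of _ "Pow {1..n}"] rev_finite_subset)
  have "{e\<in>G. e \<subseteq> S} = G \<inter> ?K" if "G \<in> Pow ?E" for G
    using that by (auto simp: Kn_edges_def clique_edges_def)
  then have "P_span n S p = (\<Sum>G\<in>Pow ?E. if ?spans G then subset_weight p ?E G else 0)"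
    unfolding P_span_def internally_spanned_def subset_weight_def by (intro sum.cong) auto
  also have "\<dots> = (\<Sum>H\<in>Pow ?K. \<Sum>G\<in>{G\<in>Pow ?E. G \<inter> ?K = H}.
                      if ?spans G then subset_weight p ?E G else 0)"
    using fin by (intro sum.group[symmetric]) auto
  also have "\<dots> = (\<Sum>H\<in>Pow ?K. if k4_closure H = ?K then subset_weight p ?K H else 0)"
  proof (rule sum.cong[OF refl])
    fix H assume H: "H \<in> Pow ?K"
    have "(\<Sum>G\<in>{G\<in>Pow ?E. G \<inter> ?K = H}. if ?spans G then subset_weight p ?E G else 0)
        = (\<Sum>G\<in>{G\<in>Pow ?E. G \<inter> ?K = H}. if k4_closure H = ?K then subset_weight p ?E G else 0)"
      by (rule sum.cong) auto
    also have "\<dots> = (if k4_closure H = ?K then subset_weight p ?K H else 0)"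
      using sum_subset_weight_restrict[OF fin(1) K_sub, of H p] H by simp
    finally show "(\<Sum>G\<in>{G\<in>Pow ?E. G \<inter> ?K = H}. if ?spans G then subset_weight p ?E G else 0)
        = (if k4_closure H = ?K then subset_weight p ?K H else 0)" .
  qed
  also have "\<dots> = span_prob p S"
    unfolding span_prob_def using fin by (intro sum.inter_filter[symmetric]) simp
  finally show ?thesis .
qed

section \<open>Spanning graphs have at least \<open>2l - 3\<close> edges\<close>

definition family_edges :: "nat set set \<Rightarrow> nat set set" where
  "family_edges F = (\<Union>C\<in>F. clique_edges C)"

text \<open>A clique on \<open>C\<close> needs \<open>2|C| - 3\<close> edges to be spanned; a single edge costs \<open>1\<close>.\<close>
definition family_cost :: "nat set set \<Rightarrow> int" where
  "family_cost F = (\<Sum>C\<in>F. 2 * int (card C) - 3)"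

definition clique_family :: "nat set set \<Rightarrow> bool" where
  "clique_family F \<longleftrightarrow> finite F \<and> (\<forall>C\<in>F. finite C \<and> 2 \<le> card C)"

definition linear_family :: "nat set set \<Rightarrow> bool" where
  "linear_family F \<longleftrightarrow> (\<forall>A\<in>F. \<forall>B\<in>F. A \<noteq> B \<longrightarrow> card (A \<inter> B) \<le> 1)"

definition triangle_closed :: "nat set set \<Rightarrow> bool" where
  "triangle_closed F \<longleftrightarrow> (\<forall>x y z. distinct [x, y, z] \<and> {x, y} \<in> family_edges F
     \<and> {y, z} \<in> family_edges F \<and> {x, z} \<in> family_edges F \<longrightarrow> (\<exists>C\<in>F. x \<in> C \<and> y \<in> C \<and> z \<in> C))"

definition closed_linear_family :: "nat set set \<Rightarrow> bool" where
  "closed_linear_family F \<longleftrightarrow> clique_family F \<and> linear_family F \<and> triangle_closed F"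

lemma doubleton_in_clique_edges: "x \<noteq> y \<Longrightarrow> {x, y} \<in> clique_edges C \<longleftrightarrow> x \<in> C \<and> y \<in> C"
  unfolding clique_edges_def by auto

lemma doubleton_in_family_edges:
  "x \<noteq> y \<Longrightarrow> {x, y} \<in> family_edges F \<longleftrightarrow> (\<exists>C\<in>F. x \<in> C \<and> y \<in> C)"
  unfolding family_edges_def using doubleton_in_clique_edges by blast

lemma closed_linear_family_triangle:
  assumes "closed_linear_family F" "distinct [x, y, z]"
    and "\<exists>C\<in>F. x \<in> C \<and> y \<in> C" "\<exists>C\<in>F. y \<in> C \<and> z \<in> C" "\<exists>C\<in>F. x \<in> C \<and> z \<in> C"
  shows "\<exists>C\<in>F. x \<in> C \<and> y \<in> C \<and> z \<in> C"
  using assms doubleton_in_family_edges[of x y F] doubleton_in_family_edges[of y z F]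
    doubleton_in_family_edges[of x z F]
  unfolding closed_linear_family_def triangle_closed_def by auto

lemma closed_linear_family_eqI:
  assumes "closed_linear_family F" "C \<in> F" "D \<in> F" "w \<in> C \<inter> D" "x \<in> C \<inter> D" "w \<noteq> x"
  shows "C = D"
proof (rule ccontr)
  assume "C \<noteq> D"
  then have "card (C \<inter> D) \<le> 1"
    using assms(1-3) unfolding closed_linear_family_def linear_family_def by blast
  moreover have "finite (C \<inter> D)"
    using assms(1,2) unfolding closed_linear_family_def clique_family_def by blast
  then have "card {w, x} \<le> card (C \<inter> D)"
    using assms(4,5) by (intro card_mono) auto
  ultimately show False using assms(6) by simp
qed

text \<open>Within a closed linear family, the two triangles \<open>uwx\<close> and \<open>vwx\<close> of a \<open>K\<^sub>4\<close>-step lie in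
  members sharing \<open>w\<close> and \<open>x\<close>, hence in the same member, which then also contains \<open>uv\<close>.\<close>
lemma k4_closure_subset_family_edges:
  assumes "closed_linear_family F" "H \<subseteq> family_edges F"
  shows "k4_closure H \<subseteq> family_edges F"
proof
  fix e assume "e \<in> k4_closure H"
  then show "e \<in> family_edges F"
  proof (induction rule: k4_closure.induct)
    case (base e)
    then show ?case using assms(2) by blast
  next
    case (step u v w x)
    then have covered: "a \<noteq> b \<Longrightarrow> {a, b} \<in> family_edges F \<Longrightarrow> \<exists>C\<in>F. a \<in> C \<and> b \<in> C" for a b
      using doubleton_in_family_edges by blast
    obtain C where C: "C \<in> F" "u \<in> C" "w \<in> C" "x \<in> C"
      using closed_linear_family_triangle[OF assms(1), of u w x] step covered by fastforce
    obtain D where D: "D \<in> F" "v \<in> D" "w \<in> D" "x \<in> D"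
      using closed_linear_family_triangle[OF assms(1), of v w x] step covered by fastforce
    have "C = D" using closed_linear_family_eqI[OF assms(1) C(1) D(1), of w x] C D step(1) by auto
    then show ?case using C D step(1) doubleton_in_family_edges[of u v F] by auto
  qed
qed

lemma family_merge:
  assumes "clique_family F" "R \<subseteq> F" "2 \<le> card R"
    and cost: "2 * int (card (\<Union>R)) - 3 \<le> family_cost R"
  defines "F' \<equiv> insert (\<Union>R) (F - R)"
  shows "clique_family F'" "card F' < card F"
    "family_edges F \<subseteq> family_edges F'" "family_cost F' \<le> family_cost F"
proof -
  have fin: "finite F" "finite R" and mem: "\<forall>C\<in>F. finite C \<and> 2 \<le> card C"
    using assms(1,2) finite_subset unfolding clique_family_def by auto
  obtain C where C: "C \<in> R" using assms(3) by fastforce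
  have fin_X: "finite (\<Union>R)" using fin mem assms(2) by blast
  have "card C \<le> card (\<Union>R)" using C fin_X by (intro card_mono) auto
  then have card_X: "2 \<le> card (\<Union>R)" using C mem assms(2) by fastforce
  show "clique_family F'"
    using fin mem fin_X card_X unfolding F'_def clique_family_def by auto
  have "card R \<le> card F" using fin assms(2) by (simp add: card_mono)
  moreover have "card F' \<le> Suc (card (F - R))"
    unfolding F'_def using fin by (simp add: card_insert_if)
  ultimately show "card F' < card F"
    using assms(3) fin assms(2) by (simp add: card_Diff_subset)
  show "family_edges F \<subseteq> family_edges F'"
    unfolding family_edges_def F'_def clique_edges_def by blast
  have "family_cost F' \<le> family_cost (F - R) + (2 * int (card (\<Union>R)) - 3)"
    unfolding family_cost_def F'_def using fin card_X by (simp add: sum.insert_if)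
  also have "\<dots> \<le> family_cost (F - R) + family_cost R" using cost by simp
  also have "\<dots> = family_cost F"
    unfolding family_cost_def
    using sum.subset_diff[OF assms(2) fin(1), of "\<lambda>C. 2 * int (card C) - 3"] by simp
  finally show "family_cost F' \<le> family_cost F" .
qed

text \<open>\<open>R\<close> consists of two members sharing two vertices, or of three covering a triangle with no
  common vertex; their union is then at least 2 (resp. 3) smaller than the sum of their sizes.\<close>
lemma mergeable_if_not_closed_linear:
  assumes "clique_family F" "\<not> closed_linear_family F"
  obtains R where "R \<subseteq> F" "2 \<le> card R" "2 * int (card (\<Union>R)) - 3 \<le> family_cost R"
proof -
  have mem: "finite C" "2 \<le> card C" if "C \<in> F" for C
    using assms(1) that unfolding clique_family_def by auto
  show ?thesis
  proof (cases "\<exists>A\<in>F. \<exists>B\<in>F. A \<noteq> B \<and> 2 \<le> card (A \<inter> B)")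
    case True
    then obtain A B where AB: "A \<in> F" "B \<in> F" "A \<noteq> B" "2 \<le> card (A \<inter> B)" by blast
    have "card (A \<union> B) + card (A \<inter> B) = card A + card B"
      using card_Un_Int[of A B] mem AB by simp
    then have "2 * int (card (\<Union>{A, B})) - 3 \<le> family_cost {A, B}"
      using AB unfolding family_cost_def by simp
    then show ?thesis using that[of "{A, B}"] AB by simp
  next
    case False
    then have "linear_family F" unfolding linear_family_def by fastforce
    then have "\<not> triangle_closed F" using assms unfolding closed_linear_family_def by blast
    then obtain x y z where xyz: "distinct [x, y, z]"
      "{x, y} \<in> family_edges F" "{y, z} \<in> family_edges F" "{x, z} \<in> family_edges F"
      and no_member: "\<not> (\<exists>C\<in>F. x \<in> C \<and> y \<in> C \<and> z \<in> C)"
      unfolding triangle_closed_def by blast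
    obtain A where A: "A \<in> F" "x \<in> A" "y \<in> A"
      using xyz(1,2) doubleton_in_family_edges[of x y F] by auto
    obtain B where B: "B \<in> F" "y \<in> B" "z \<in> B"
      using xyz(1,3) doubleton_in_family_edges[of y z F] by auto
    obtain C where C: "C \<in> F" "x \<in> C" "z \<in> C"
      using xyz(1,4) doubleton_in_family_edges[of x z F] by auto
    note ABC = A B C
    then have distinct: "distinct [A, B, C]" using no_member by auto
    have "card (A \<union> B) + card (A \<inter> B) = card A + card B"
      using card_Un_Int[of A B] mem ABC by simp
    moreover have "card (A \<union> B \<union> C) + card ((A \<union> B) \<inter> C) = card (A \<union> B) + card C"
      using card_Un_Int[of "A \<union> B" C] mem ABC by simp
    moreover have "card {y} \<le> card (A \<inter> B)"
      using ABC mem by (intro card_mono) auto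
    moreover have "card {x, z} \<le> card ((A \<union> B) \<inter> C)"
      using ABC mem by (intro card_mono) auto
    ultimately have "2 * int (card (\<Union>{A, B, C})) - 3 \<le> family_cost {A, B, C}"
      using distinct xyz(1) unfolding family_cost_def by (simp add: Un_assoc)
    then show ?thesis using that[of "{A, B, C}"] ABC distinct by simp
  qed
qed

lemma exists_closed_linear_family:
  assumes "clique_family F"
  obtains G where "closed_linear_family G" "family_edges F \<subseteq> family_edges G"
    "family_cost G \<le> family_cost F"
  using assms
proof (induction "card F" arbitrary: F rule: less_induct)
  case less
  show ?case
  proof (cases "closed_linear_family F")
    case False
    then obtain R where R: "R \<subseteq> F" "2 \<le> card R" "2 * int (card (\<Union>R)) - 3 \<le> family_cost R"
      using mergeable_if_not_closed_linear less.prems(2) by blast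
    note merged = family_merge[OF less.prems(2) R]
    show ?thesis
    proof (rule less.hyps[OF merged(2) _ merged(1)])
      fix G assume G: "closed_linear_family G" "family_edges (insert (\<Union>R) (F - R)) \<subseteq> family_edges G"
        "family_cost G \<le> family_cost (insert (\<Union>R) (F - R))"
      show thesis by (rule less.prems(1)[OF G(1)]) (use G merged(3,4) in auto)
    qed
  qed (use less.prems in blast)
qed

lemma closed_linear_family_covers_clique:
  assumes "closed_linear_family G" "finite S" "2 \<le> card S"
    and "clique_edges S \<subseteq> family_edges G"
  obtains C where "C \<in> G" "S \<subseteq> C"
proof -
  have covered: "\<exists>C\<in>G. u \<in> C \<and> v \<in> C" if "u \<in> S" "v \<in> S" "u \<noteq> v" for u v
    using assms(4) that doubleton_in_clique_edges[of u v S] doubleton_in_family_edges[of u v G]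
    by blast
  obtain a b where ab: "a \<in> S" "b \<in> S" "a \<noteq> b"
    using assms(3) card_le_Suc0_iff_eq[OF assms(2)] by (metis not_less_eq_eq numeral_2_eq_2)
  then obtain C where C: "C \<in> G" "a \<in> C" "b \<in> C" using covered by blast
  have "s \<in> C" if s: "s \<in> S" for s
  proof (cases "s = a \<or> s = b")
    case False
    then obtain D where D: "D \<in> G" "s \<in> D" "a \<in> D" "b \<in> D"
      using closed_linear_family_triangle[OF assms(1), of s a b] covered s ab by auto
    then have "C = D" using closed_linear_family_eqI[OF assms(1) C(1) D(1), of a b] C ab by auto
    then show ?thesis using D by simp
  qed (use C in auto)
  then show ?thesis using that C(1) by blast
qed

lemma family_cost_member_le:
  assumes "clique_family G" "C \<in> G"
  shows "2 * int (card C) - 3 \<le> family_cost G"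
proof -
  have "0 \<le> 2 * int (card C') - 3" if "C' \<in> G" for C'
    using assms(1) that unfolding clique_family_def by force
  then show ?thesis
    unfolding family_cost_def using assms by (intro member_le_sum) (auto simp: clique_family_def)
qed

lemma card_ge_if_k4_closure_spans:
  assumes "finite H" "\<forall>e\<in>H. card e = 2" "finite S" "2 \<le> card S"
    and spans: "clique_edges S \<subseteq> k4_closure H"
  shows "2 * card S - 3 \<le> card H"
proof -
  have "clique_family H"
    using assms(1,2) unfolding clique_family_def by (auto intro: card_ge_0_finite)
  then obtain G where G: "closed_linear_family G" "family_edges H \<subseteq> family_edges G"
    "family_cost G \<le> family_cost H"
    by (rule exists_closed_linear_family)
  have "H \<subseteq> family_edges H"
    using assms(2) unfolding family_edges_def clique_edges_def by auto
  then have "clique_edges S \<subseteq> family_edges G"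
    using spans k4_closure_subset_family_edges[OF G(1)] G(2) by blast
  then obtain C where C: "C \<in> G" "S \<subseteq> C"
    using closed_linear_family_covers_clique[OF G(1) assms(3,4)] by blast
  have G_family: "clique_family G" using G(1) unfolding closed_linear_family_def by blast
  then have "2 * int (card S) - 3 \<le> 2 * int (card C) - 3"
    using C card_mono[of C S] unfolding clique_family_def by simp
  also have "\<dots> \<le> family_cost G" by (rule family_cost_member_le[OF G_family C(1)])
  also have "\<dots> \<le> family_cost H" by (rule G(3))
  also have "\<dots> = int (card H)" unfolding family_cost_def using assms(2) by simp
  finally show ?thesis by linarith
qed

lemma span_prob_le:
  assumes "finite S" "2 \<le> card S" "0 \<le> p" "p \<le> 1"
  shows "span_prob p S \<le> real ((card S choose 2) choose (2 * card S - 3)) * p ^ (2 * card S - 3)"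
proof -
  let ?K = "clique_edges S" and ?m = "2 * card S - 3"
  have "{H\<in>Pow ?K. k4_closure H = ?K} \<subseteq> {H\<in>Pow ?K. ?m \<le> card H}"
  proof safe
    fix H assume "H \<subseteq> ?K" "k4_closure H = ?K"
    then show "?m \<le> card H"
      using card_ge_if_k4_closure_spans[of H S] assms finite_clique_edges[OF assms(1)]
      by (auto simp: clique_edges_def intro: rev_finite_subset)
  qed
  then have "span_prob p S \<le> (\<Sum>H\<in>{H\<in>Pow ?K. ?m \<le> card H}. subset_weight p ?K H)"
    unfolding span_prob_def using assms finite_clique_edges[OF assms(1)]
    by (intro sum_mono2) (auto simp: subset_weight_nonneg)
  also have "\<dots> \<le> real (card ?K choose ?m) * p ^ ?m"
    using assms finite_clique_edges[OF assms(1)] by (intro sum_subset_weight_card_ge)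
  finally show ?thesis using card_clique_edges[OF assms(1)] by simp
qed

section \<open>Chain graphs\<close>

lemma k4_closure_subset_clique_edges:
  assumes "H \<subseteq> clique_edges S"
  shows "k4_closure H \<subseteq> clique_edges S"
proof
  fix e assume "e \<in> k4_closure H"
  then show "e \<in> clique_edges S"
  proof (induction rule: k4_closure.induct)
    case (base e)
    then show ?case using assms by auto
  next
    case (step u v w x)
    then show ?case unfolding clique_edges_def by auto
  qed
qed

lemma clique_edges_doubleton: "x \<noteq> y \<Longrightarrow> clique_edges {x, y} = {{x, y}}"
  unfolding clique_edges_def by (auto simp: card_2_iff)

text \<open>A new vertex joined to two vertices of a spanned clique forms a \<open>K\<^sub>4\<close> minus an edge with
  these two and any third vertex of the clique.\<close>
lemma clique_edges_insert_subset_k4_closure: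
  assumes IH: "clique_edges T \<subseteq> k4_closure H" and "v \<notin> T"
    and ab: "a \<in> T" "b \<in> T" "a \<noteq> b" "{v, a} \<in> k4_closure H" "{v, b} \<in> k4_closure H"
  shows "clique_edges (insert v T) \<subseteq> k4_closure H"
proof
  have old: "{x, y} \<in> k4_closure H" if "x \<in> T" "y \<in> T" "x \<noteq> y" for x y
    using IH that doubleton_in_clique_edges by blast
  have new: "{v, t} \<in> k4_closure H" if "t \<in> T" for t
  proof (cases "t = a \<or> t = b")
    case False
    then have "distinct [v, t, a, b]" using that ab \<open>v \<notin> T\<close> by auto
    then show ?thesis
      using k4_closure.step[of v t a b] ab old that False by (simp add: insert_commute)
  qed (use ab in auto)
  have new': "{t, v} \<in> k4_closure H" if "t \<in> T" for t
    using new[OF that] by (simp add: insert_commute)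
  fix e assume "e \<in> clique_edges (insert v T)"
  then obtain x y where e: "e = {x, y}" "x \<noteq> y" "x \<in> insert v T" "y \<in> insert v T"
    unfolding clique_edges_def by (auto simp: card_2_iff)
  then consider "x = v" "y \<in> T" | "y = v" "x \<in> T" | "x \<in> T" "y \<in> T" by auto
  then show "e \<in> k4_closure H"
    by cases (use e old new new' in simp_all)
qed

definition chain_graph :: "(nat \<Rightarrow> nat) \<Rightarrow> nat \<Rightarrow> (nat \<Rightarrow> nat set) \<Rightarrow> nat set set" where
  "chain_graph s l c = insert {s 1, s 2} (\<Union>k\<in>{3..l}. (\<lambda>j. {s k, s j}) ` c k)"

definition chain_choices :: "nat \<Rightarrow> (nat \<Rightarrow> nat set) set" where
  "chain_choices l = (\<Pi>\<^sub>E k\<in>{3..l}. {T. T \<subseteq> {1..<k} \<and> card T = 2})"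

lemma card_chain_choices: "card (chain_choices l) = (\<Prod>k\<in>{3..l}. (k - 1) choose 2)"
  unfolding chain_choices_def by (simp add: card_PiE n_subsets)

lemma chain_choicesD:
  assumes "c \<in> chain_choices l" "k \<in> {3..l}"
  shows "c k \<subseteq> {1..<k}" "card (c k) = 2"
  using assms unfolding chain_choices_def by auto

lemma chain_graph_subset_clique_edges:
  assumes "inj_on s {1..l}" "2 \<le> l" "c \<in> chain_choices l"
  shows "chain_graph s l c \<subseteq> clique_edges (s ` {1..l})"
proof
  have edge: "{s i, s j} \<in> clique_edges (s ` {1..l})"
    if "i \<in> {1..l}" "j \<in> {1..l}" "i \<noteq> j" for i j
  proof -
    have "s i \<noteq> s j" using that inj_onD[OF assms(1)] by blast
    then show ?thesis using that doubleton_in_clique_edges by blast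
  qed
  fix e assume "e \<in> chain_graph s l c"
  then consider "e = {s 1, s 2}" | k j where "k \<in> {3..l}" "j \<in> c k" "e = {s k, s j}"
    unfolding chain_graph_def by blast
  then show "e \<in> clique_edges (s ` {1..l})"
  proof cases
    case 1
    then show ?thesis using edge[of 1 2] assms(2) by simp
  next
    case 2
    then show ?thesis using edge[of k j] chain_choicesD(1)[OF assms(3) 2(1)] by auto
  qed
qed

lemma card_chain_graph_le:
  assumes "c \<in> chain_choices l" "2 \<le> l"
  shows "card (chain_graph s l c) \<le> 2 * l - 3"
proof -
  have fin: "finite (c k)" "card (c k) = 2" if "k \<in> {3..l}" for k
    using chain_choicesD[OF assms(1) that] by (auto intro: card_ge_0_finite)
  let ?new = "\<Union>k\<in>{3..l}. (\<lambda>j. {s k, s j}) ` c k"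
  have "card ?new \<le> (\<Sum>k\<in>{3..l}. card ((\<lambda>j. {s k, s j}) ` c k))"
    by (rule card_UN_le) simp
  also have "\<dots> \<le> (\<Sum>k\<in>{3..l}. 2)"
    by (rule sum_mono) (metis card_image_le fin)
  finally have "card ?new \<le> 2 * (l - 2)" by simp
  then show ?thesis
    unfolding chain_graph_def using assms(2) by (intro card_insert_le_m1) auto
qed

lemma chain_choice_eq:
  assumes "inj_on s {1..l}" "c \<in> chain_choices l" "k \<in> {3..l}"
  shows "c k = {j\<in>{1..<k}. {s k, s j} \<in> chain_graph s l c}"
proof (intro equalityI subsetI)
  fix j assume "j \<in> c k"
  then show "j \<in> {j\<in>{1..<k}. {s k, s j} \<in> chain_graph s l c}"
    using chain_choicesD[OF assms(2,3)] assms(3) unfolding chain_graph_def by blast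
next
  fix j assume "j \<in> {j\<in>{1..<k}. {s k, s j} \<in> chain_graph s l c}"
  then have j: "1 \<le> j" "j < k" and edge: "{s k, s j} \<in> chain_graph s l c" by auto
  have eq: "a = b" if "a \<in> {1..l}" "b \<in> {1..l}" "s a = s b" for a b
    by (rule inj_onD[OF assms(1) that(3) that(1,2)])
  from edge consider "{s k, s j} = {s 1, s 2}"
    | k' j' where "k' \<in> {3..l}" "j' \<in> c k'" "{s k, s j} = {s k', s j'}"
    unfolding chain_graph_def insert_iff UN_iff image_iff by blast
  then show "j \<in> c k"
  proof cases
    case 1
    then have "s k = s 1 \<or> s k = s 2" by (auto simp: doubleton_eq_iff)
    then show ?thesis using eq[of k 1] eq[of k 2] assms(3) by auto
  next
    case 2
    have j': "1 \<le> j'" "j' < k'" using chain_choicesD(1)[OF assms(2) 2(1)] 2(2) by auto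
    from 2(3) have "s k = s k' \<and> s j = s j' \<or> s k = s j' \<and> s j = s k'"
      by (simp add: doubleton_eq_iff)
    then show ?thesis
    proof
      assume "s k = s k' \<and> s j = s j'"
      then have "k = k'" "j = j'"
        using eq[of k k'] eq[of j j'] assms(3) 2(1) j j' by auto
      then show ?thesis using 2(2) by simp
    next
      assume "s k = s j' \<and> s j = s k'"
      then have "k = j'" "j = k'"
        using eq[of k j'] eq[of j k'] assms(3) 2(1) j j' by auto
      then show ?thesis using j j' by simp
    qed
  qed
qed

lemma inj_on_chain_graph:
  assumes "inj_on s {1..l}"
  shows "inj_on (chain_graph s l) (chain_choices l)"
proof (rule inj_onI, rule ext)
  fix c c' k assume c: "c \<in> chain_choices l" "c' \<in> chain_choices l"
    and eq: "chain_graph s l c = chain_graph s l c'"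
  show "c k = c' k"
  proof (cases "k \<in> {3..l}")
    case True
    have "c k = {j\<in>{1..<k}. {s k, s j} \<in> chain_graph s l c}"
      by (rule chain_choice_eq[OF assms c(1) True])
    also have "\<dots> = c' k"
      unfolding eq by (rule chain_choice_eq[OF assms c(2) True, symmetric])
    finally show ?thesis .
  next
    case False
    then show ?thesis
      using PiE_arb[OF c(1)[unfolded chain_choices_def] False]
        PiE_arb[OF c(2)[unfolded chain_choices_def] False] by simp
  qed
qed

lemma k4_closure_chain_graph:
  assumes "inj_on s {1..l}" "2 \<le> l" "c \<in> chain_choices l"
  shows "k4_closure (chain_graph s l c) = clique_edges (s ` {1..l})"
proof
  show "k4_closure (chain_graph s l c) \<subseteq> clique_edges (s ` {1..l})"
    by (intro k4_closure_subset_clique_edges chain_graph_subset_clique_edges assms)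
  let ?cl = "k4_closure (chain_graph s l c)"
  have "clique_edges (s ` {1..k}) \<subseteq> ?cl" if "2 \<le> k" "k \<le> l" for k
    using that
  proof (induction k rule: dec_induct)
    case base
    have "s 1 \<noteq> s 2" using inj_onD[OF assms(1), of 1 2] assms(2) by auto
    moreover have "{1..2::nat} = {1, 2}" by auto
    ultimately show ?case
      by (simp add: clique_edges_doubleton chain_graph_def k4_closure.base)
  next
    case (step k)
    have k: "Suc k \<in> {3..l}" using step by auto
    obtain a b where ab: "c (Suc k) = {a, b}" "a \<noteq> b"
      using chain_choicesD(2)[OF assms(3) k] by (meson card_2_iff)
    then have ab_range: "a \<in> {1..k}" "b \<in> {1..k}" using chain_choicesD(1)[OF assms(3) k] by auto
    have joined: "{s (Suc k), s j} \<in> ?cl" if "j \<in> c (Suc k)" for j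
      using k that unfolding chain_graph_def by (intro k4_closure.base) blast
    have inj: "i = j" if "i \<in> {1..Suc k}" "j \<in> {1..Suc k}" "s i = s j" for i j
      using inj_onD[OF assms(1) that(3)] that step.prems by auto
    have "s (Suc k) \<notin> s ` {1..k}"
    proof
      assume "s (Suc k) \<in> s ` {1..k}"
      then obtain i where "i \<in> {1..k}" "s (Suc k) = s i" by auto
      then show False using inj[of "Suc k" i] by auto
    qed
    moreover have "s a \<noteq> s b" using inj[of a b] ab ab_range by auto
    moreover have "clique_edges (s ` {1..k}) \<subseteq> ?cl" using step.IH step.prems by simp
    ultimately have "clique_edges (insert (s (Suc k)) (s ` {1..k})) \<subseteq> ?cl"
      using ab_range joined[of a] joined[of b] ab(1)
      by (intro clique_edges_insert_subset_k4_closure[of _ _ _ "s a" "s b"]) simp_all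
    moreover have "s ` {1..Suc k} = insert (s (Suc k)) (s ` {1..k})"
      by (auto simp: atLeastAtMostSuc_conv)
    ultimately show ?case by simp
  qed
  then show "clique_edges (s ` {1..l}) \<subseteq> ?cl" using assms(2) by simp
qed

lemma two_mult_choose_two: "2 * (n choose 2) = n * (n - 1)"
proof -
  have "even (n * (n - 1))" by auto
  then show ?thesis by (simp add: choose_two)
qed

lemma real_choose_two: "real (n choose 2) = real n * (real n - 1) / 2"
proof -
  have "2 * real (n choose 2) = real n * real (n - 1)"
    using two_mult_choose_two[of n] by (metis of_nat_mult of_nat_numeral)
  then show ?thesis by (cases n) auto
qed

lemma subset_weight_ge:
  assumes "0 \<le> p" "p \<le> 1" "card H \<le> m"
  shows "p ^ m * (1 - p) ^ card A \<le> subset_weight p A H"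
  unfolding subset_weight_def using assms
  by (intro mult_mono power_decreasing) auto

lemma span_prob_ge:
  assumes "finite S" "2 \<le> card S" "0 \<le> p" "p \<le> 1" "p * real (card S)^2 \<le> 1"
  shows "real (\<Prod>k\<in>{3..card S}. (k - 1) choose 2) * p ^ (2 * card S - 3) / 2 \<le> span_prob p S"
proof -
  define l where "l = card S"
  let ?K = "clique_edges S" and ?m = "2 * l - 3"
  obtain s where s: "bij_betw s {1..l} S"
    unfolding l_def using ex_bij_betw_nat_finite_1[OF assms(1)] by blast
  then have inj: "inj_on s {1..l}" and S_eq: "S = s ` {1..l}"
    by (auto simp: bij_betw_def)
  have l: "2 \<le> l" using assms(2) unfolding l_def .
  let ?F = "chain_graph s l ` chain_choices l"
  have "2 * real (card ?K) * p = real l * (real l - 1) * p"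
    by (simp add: card_clique_edges[OF assms(1)] real_choose_two l_def)
  also have "\<dots> \<le> real l * real l * p"
    using assms(3) by (intro mult_right_mono mult_left_mono) auto
  also have "\<dots> \<le> 1" using assms(5) by (simp add: l_def power2_eq_square mult.commute)
  finally have "2 * real (card ?K) * p \<le> 1" .
  moreover have "1 + real (card ?K) * - p \<le> (1 + - p) ^ card ?K"
    using assms(4) by (intro Bernoulli_inequality) simp
  ultimately have half: "1 / 2 \<le> (1 - p) ^ card ?K" by simp
  have weight: "p ^ ?m / 2 \<le> subset_weight p ?K H" if "H \<in> ?F" for H
  proof -
    obtain c where c: "c \<in> chain_choices l" "H = chain_graph s l c" using \<open>H \<in> ?F\<close> by blast
    have "p ^ ?m / 2 \<le> p ^ ?m * (1 - p) ^ card ?K"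
      using mult_left_mono[OF half, of "p ^ ?m"] assms(3) by simp
    also have "\<dots> \<le> subset_weight p ?K H"
      using c card_chain_graph_le[OF c(1) l] assms(3,4) by (intro subset_weight_ge) auto
    finally show ?thesis .
  qed
  have spanning: "?F \<subseteq> {H\<in>Pow ?K. k4_closure H = ?K}"
    using chain_graph_subset_clique_edges[OF inj l] k4_closure_chain_graph[OF inj l]
    unfolding S_eq by blast
  have "real (\<Prod>k\<in>{3..l}. (k - 1) choose 2) * p ^ ?m / 2 = (\<Sum>H\<in>?F. p ^ ?m / 2)"
    using card_image[OF inj_on_chain_graph[OF inj]] by (simp add: card_chain_choices)
  also have "\<dots> \<le> (\<Sum>H\<in>?F. subset_weight p ?K H)" using weight by (rule sum_mono)
  also have "\<dots> \<le> span_prob p S"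
    unfolding span_prob_def using spanning finite_clique_edges[OF assms(1)] assms(3,4)
    by (intro sum_mono2) (auto simp: subset_weight_nonneg)
  finally show ?thesis unfolding l_def .
qed

section \<open>Numerical estimates\<close>

lemma Suc_pow_le_exp_mult_pow: "(real n + 1) ^ n \<le> exp 1 * real n ^ n"
proof (cases "n = 0")
  case False
  then have n: "real n > 0" by simp
  have "(real n + 1) ^ n = real n ^ n * (1 + 1 / real n) ^ n"
    using n by (simp add: power_mult_distrib[symmetric] field_simps)
  also have "(1 + 1 / real n) ^ n \<le> exp (1 / real n) ^ n"
    by (intro power_mono exp_ge_add_one_self_aux) (use n in auto)
  also have "exp (1 / real n) ^ n = exp 1"
    using n by (simp add: exp_of_nat_mult[symmetric])
  finally show ?thesis using n by (simp add: mult.commute mult_left_mono)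
qed simp

lemma pow_le_exp_pow_mult_fact: "real n ^ n \<le> exp 1 ^ n * fact n"
proof (induction n)
  case (Suc n)
  have "real (Suc n) ^ Suc n = (real n + 1) * (real n + 1) ^ n" by (simp add: add.commute)
  also have "\<dots> \<le> (real n + 1) * (exp 1 * (exp 1 ^ n * fact n))"
    using Suc_pow_le_exp_mult_pow[of n] Suc.IH
    by (intro mult_left_mono) (auto intro: order_trans mult_left_mono)
  also have "\<dots> = exp 1 ^ Suc n * fact (Suc n)" by (simp add: algebra_simps)
  finally show ?case .
qed simp

lemma binomial_le_exp_pow:
  assumes "0 < m"
  shows "real (N choose m) \<le> (exp 1 * real N / real m) ^ m"
proof -
  have "real (N choose m) * real m ^ m \<le> real (N choose m) * (exp 1 ^ m * fact m)"
    by (intro mult_left_mono pow_le_exp_pow_mult_fact) simp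
  also have "\<dots> = exp 1 ^ m * (real (N choose m) * fact m)" by simp
  also have "\<dots> \<le> exp 1 ^ m * real N ^ m"
    using binomial_fact_pow[of N m]
    by (intro mult_left_mono) (metis of_nat_fact of_nat_le_iff of_nat_mult of_nat_power, simp)
  finally show ?thesis
    using assms by (simp add: power_divide power_mult_distrib pos_le_divide_eq)
qed

lemma prod_choose_two_eq_fact:
  assumes "2 \<le> l"
  shows "2 ^ (l - 2) * (\<Prod>k\<in>{3..l}. (k - 1) choose 2) = fact (l - 1) * (fact (l - 2) :: nat)"
  using assms
proof (induction l rule: dec_induct)
  case (step l)
  have "2 * (l choose 2) = l * (l - 1)" by (rule two_mult_choose_two)
  moreover have "{3..Suc l} = insert (Suc l) {3..l}" using step.hyps by auto
  moreover obtain k where "l = Suc (Suc k)" using step.hyps by (metis add_2_eq_Suc le_Suc_ex)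
  ultimately show ?case using step.IH by (simp add: algebra_simps)
qed simp

text \<open>Squaring \<open>l\<^sup>l \<le> e\<^sup>l l!\<close> and using \<open>l!\<^sup>2 \<le> l\<^sup>3 (l-1)! (l-2)!\<close>.\<close>
lemma prod_choose_two_lower_bound:
  assumes "2 \<le> l"
  shows "(1 / (2 * exp 1 ^ 2)) ^ l * real l ^ (2 * l - 3)
    \<le> real (\<Prod>k\<in>{3..l}. (k - 1) choose 2) / 4"
proof -
  define P where "P = (\<Prod>k\<in>{3..l}. (k - 1) choose 2)"
  define A :: real where "A = fact (l - 1) * fact (l - 2)"
  have P: "2 ^ (l - 2) * real P = A"
    using arg_cong[OF prod_choose_two_eq_fact[OF assms], of real] unfolding A_def P_def by simp
  obtain k where l: "l = Suc (Suc k)" using assms by (metis add_2_eq_Suc le_Suc_ex)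
  have "(fact l :: real) ^ 2 = real l * real l * real (Suc k) * A"
    unfolding A_def l by (simp add: power2_eq_square algebra_simps)
  also have "\<dots> \<le> real l ^ 3 * A"
    unfolding A_def l by (simp add: power3_eq_cube mult_left_mono mult_right_mono)
  finally have fact_sq: "(fact l :: real) ^ 2 \<le> real l ^ 3 * A" .
  have "real l ^ 3 * real l ^ (2 * l - 3) = (real l ^ l) ^ 2"
    using assms by (simp flip: power_add power_mult)
  also have "\<dots> \<le> (exp 1 ^ l * fact l) ^ 2"
    by (intro power_mono pow_le_exp_pow_mult_fact) simp
  also have "\<dots> \<le> exp 1 ^ (2 * l) * (real l ^ 3 * A)"
    using fact_sq
      by (simp add: power_mult_distrib power_mult[symmetric] mult.commute mult_left_mono)
  finally have "real l ^ (2 * l - 3) \<le> exp 1 ^ (2 * l) * A"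
    using assms by (simp add: algebra_simps)
  moreover have "(2 * exp 1 ^ 2 :: real) ^ l = 4 * 2 ^ (l - 2) * exp 1 ^ (2 * l)"
    unfolding l by (simp add: power_mult_distrib power_mult[symmetric] eval_nat_numeral power_add)
  ultimately show ?thesis
    unfolding P_def[symmetric] P[symmetric]
      by (simp add: power_divide divide_simps mult.commute mult.left_commute)
qed

text \<open>With \<open>m = 2l - 3\<close> we have \<open>l choose 2 = l (m + 1) / 4\<close>, so
  \<open>e (l choose 2) / m = (e l / 4) (1 + 1/m)\<close>.\<close>
lemma choose_choose_two_upper_bound:
  assumes "2 \<le> l"
  shows "real ((l choose 2) choose (2 * l - 3))
    \<le> 4 ^ 3 * (exp 1 / 4) ^ (2 * l) * real l ^ (2 * l - 3)"
proof -
  define m where "m = 2 * l - 3"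
  have m: "0 < m" "real m = 2 * real l - 3"
    using assms unfolding m_def by (simp_all add: of_nat_diff)
  have "real (l choose 2) = real l * (real m + 1) / 4"
    unfolding real_choose_two m(2) by (simp add: field_simps algebra_simps)
  then have "exp 1 * real (l choose 2) / real m = exp 1 * real l / 4 * ((real m + 1) / real m)"
    using m(1) by (simp add: field_simps)
  then have "real ((l choose 2) choose m)
      \<le> (exp 1 * real l / 4) ^ m * ((real m + 1) ^ m / real m ^ m)"
    using binomial_le_exp_pow[OF m(1), of "l choose 2"]
      by (simp add: power_mult_distrib power_divide)
  also have "\<dots> \<le> (exp 1 * real l / 4) ^ m * exp 1"
    using Suc_pow_le_exp_mult_pow[of m] m(1)
      by (intro mult_left_mono) (simp_all add: pos_divide_le_eq)
  also have "\<dots> \<le> (exp 1 * real l / 4) ^ m * exp 1 ^ 3"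
  proof -
    have "exp (1::real) \<le> exp 3" by simp
    also have "exp (3::real) = exp 1 ^ 3" using exp_of_nat_mult[of 3 "1::real"] by simp
    finally show ?thesis by (intro mult_left_mono) simp_all
  qed
  also have "\<dots> = 4 ^ 3 * (exp 1 / 4) ^ (2 * l) * real l ^ m"
  proof -
    have "2 * l = m + 3" using assms unfolding m_def by simp
    then show ?thesis by (simp add: power_add power_divide power_mult_distrib field_simps)
  qed
  finally show ?thesis unfolding m_def .
qed

theorem lemma4p3:
  fixes l n :: nat and p :: real and S :: "nat set"
  assumes "3 \<le> l" "l \<le> n" "0 < p" "p < 1" "p * (real l)^2 \<le> 1"
    and "S \<subseteq> {1..n}" "card S = l"
  shows "(1 / (2 * exp 1 ^ 2)) ^ l * (real l * p) ^ (2 * l - 3) \<le> P_span n S p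
       \<and> P_span n S p \<le> 4 ^ 3 * (exp 1 / 4) ^ (2 * l) * (real l * p) ^ (2 * l - 3)"
proof -
  have S: "finite S" "2 \<le> card S" using assms(1,6,7) finite_subset by auto
  define m where "m = 2 * l - 3"
  have p_m: "0 \<le> p ^ m" using assms(3) by simp
  have "(1 / (2 * exp 1 ^ 2)) ^ l * (real l * p) ^ m
      = (1 / (2 * exp 1 ^ 2)) ^ l * real l ^ m * p ^ m"
    by (simp add: power_mult_distrib)
  also have "\<dots> \<le> real (\<Prod>k\<in>{3..l}. (k - 1) choose 2) / 4 * p ^ m"
    using prod_choose_two_lower_bound[of l] assms(1) p_m unfolding m_def
      by (intro mult_right_mono) auto
  also have "\<dots> \<le> real (\<Prod>k\<in>{3..l}. (k - 1) choose 2) * p ^ m / 2"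
    using p_m by (simp add: prod_nonneg)
  also have "\<dots> \<le> span_prob p S"
    using span_prob_ge[OF S] assms(3-5,7) unfolding m_def by simp
  finally have lower: "(1 / (2 * exp 1 ^ 2)) ^ l * (real l * p) ^ m \<le> span_prob p S" .
  have "span_prob p S \<le> real ((l choose 2) choose m) * p ^ m"
    using span_prob_le[OF S] assms(3,4,7) unfolding m_def by simp
  also have "\<dots> \<le> 4 ^ 3 * (exp 1 / 4) ^ (2 * l) * real l ^ m * p ^ m"
    using choose_choose_two_upper_bound[of l] assms(1) p_m unfolding m_def
      by (intro mult_right_mono) auto
  also have "\<dots> = 4 ^ 3 * (exp 1 / 4) ^ (2 * l) * (real l * p) ^ m"
    by (simp add: power_mult_distrib)
  finally have upper: "span_prob p S \<le> 4 ^ 3 * (exp 1 / 4) ^ (2 * l) * (real l * p) ^ m" .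
  show ?thesis using lower upper P_span_eq_span_prob[OF assms(6)] unfolding m_def by simp
qed

end
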